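(* Let $A\in M_2(\mathbb F)$ be normal and let $P(A)=\{B\in M_2(\mathbb F): B \text{ normal and } A+B \text{ normal}\}$. Then $\mathrm{Span}_{\mathbb R}P(A)=M_2(\mathbb F)$ if and only if $A\in\mathbb F I$.
   Context: $\mathbb F$ is $\mathbb C$ or $\mathbb R$; a matrix $N$ is normal if $N^*N=NN^*$, where $N^*$ is the conjugate transpose (transpose if real). *)

theory Defs
  imports "HOL-Analysis.Analysis"
begin

definition cadjoint :: "complex^'n^'m \<Rightarrow> complex^'m^'n" where
  "cadjoint A = (\<chi> i j. cnj (A $ j $ i))"

definition normal_c :: "complex^'n^'n \<Rightarrow> bool" where
  "normal_c N \<longleftrightarrow> cadjoint N ** N = N ** cadjoint N"

definition normal_r :: "real^'n^'n \<Rightarrow> bool" where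
  "normal_r N \<longleftrightarrow> transpose N ** N = N ** transpose N"

definition P_c :: "complex^2^2 \<Rightarrow> (complex^2^2) set" where
  "P_c A = {B. normal_c B \<and> normal_c (A + B)}"

definition P_r :: "real^2^2 \<Rightarrow> (real^2^2) set" where
  "P_r A = {B. normal_r B \<and> normal_r (A + B)}"

end

theory Submission
  imports Defs
begin

text \<open>For normal \<open>A\<close> and \<open>B\<close>, the sum \<open>A + B\<close> is normal exactly when the cross term
  \<open>A\<^sup>*B + B\<^sup>*A - AB\<^sup>* - BA\<^sup>*\<close> vanishes. The cross term is real-linear in \<open>B\<close>, so the real span
  of \<open>P(A)\<close> lies in its kernel; if that span is everything, evaluating the cross term on matrix
  units forces \<open>A\<close> to be scalar. Conversely, adding a scalar matrix does not affect normality,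
  so \<open>P(cI)\<close> consists of all normal matrices, and these span because every matrix is the sum
  of its Hermitian and skew-Hermitian parts.\<close>

lemma matrix_add_rdistrib: "(A + B) ** C = A ** C + B ** C"
  by (simp add: matrix_matrix_mult_def vec_eq_iff sum.distrib distrib_right)

lemma mat_matrix_mult_commute: "mat c ** A = A ** mat c"
  for A :: "'a::comm_semiring_1^'n^'n"
  by (simp add: matrix_matrix_mult_def mat_def vec_eq_iff if_distrib if_distribR mult.commute
      sum.delta sum.delta' cong: if_cong)

lemma cadjoint_nth: "cadjoint A $ i $ j = cnj (A $ j $ i)"
  by (simp add: cadjoint_def)

lemma cadjoint_add: "cadjoint (A + B) = cadjoint A + cadjoint B"
  by (simp add: cadjoint_def vec_eq_iff)

lemma cadjoint_diff: "cadjoint (A - B) = cadjoint A - cadjoint B"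
  by (simp add: cadjoint_def vec_eq_iff)

lemma cadjoint_scaleR: "cadjoint (r *\<^sub>R A) = r *\<^sub>R cadjoint A"
  by (simp add: cadjoint_def vec_eq_iff)

lemma cadjoint_cadjoint [simp]: "cadjoint (cadjoint A) = A"
  by (simp add: cadjoint_def vec_eq_iff)

lemma cadjoint_mat: "cadjoint (mat c) = mat (cnj c)"
  by (simp add: cadjoint_def mat_def vec_eq_iff)

lemma matrix_mult_uminus_left: "(- A) ** B = - (A ** B)"
  for A :: "'a::ring_1^'n^'m"
  by (simp add: matrix_matrix_mult_def vec_eq_iff sum_negf)

lemma matrix_mult_uminus_right: "A ** (- B) = - (A ** B)"
  for A :: "'a::ring_1^'n^'m"
  by (simp add: matrix_matrix_mult_def vec_eq_iff sum_negf)

lemma transpose_nth: "transpose A $ i $ j = A $ j $ i"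
  by (simp add: transpose_def)

lemma transpose_add: "transpose (A + B) = transpose A + transpose B"
  by (simp add: transpose_def vec_eq_iff)

lemma transpose_diff: "transpose (A - B) = transpose A - transpose B"
  by (simp add: transpose_def vec_eq_iff)

definition self_commutator_c :: "complex^'n^'n \<Rightarrow> complex^'n^'n" where
  "self_commutator_c N = cadjoint N ** N - N ** cadjoint N"

definition self_commutator_r :: "real^'n^'n \<Rightarrow> real^'n^'n" where
  "self_commutator_r N = transpose N ** N - N ** transpose N"

definition normal_cross_c :: "complex^'n^'n \<Rightarrow> complex^'n^'n \<Rightarrow> complex^'n^'n" where
  "normal_cross_c A B = cadjoint A ** B + cadjoint B ** A - A ** cadjoint B - B ** cadjoint A"

definition normal_cross_r :: "real^'n^'n \<Rightarrow> real^'n^'n \<Rightarrow> real^'n^'n" where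
  "normal_cross_r A B = transpose A ** B + transpose B ** A - A ** transpose B - B ** transpose A"

lemma normal_c_iff_self_commutator: "normal_c N \<longleftrightarrow> self_commutator_c N = 0"
  by (simp add: normal_c_def self_commutator_c_def)

lemma normal_r_iff_self_commutator: "normal_r N \<longleftrightarrow> self_commutator_r N = 0"
  by (simp add: normal_r_def self_commutator_r_def)

lemma self_commutator_c_add:
  "self_commutator_c (A + B) = self_commutator_c A + self_commutator_c B + normal_cross_c A B"
  unfolding self_commutator_c_def normal_cross_c_def cadjoint_add matrix_add_ldistrib
    matrix_add_rdistrib
  by (simp add: algebra_simps)

lemma self_commutator_r_add:
  "self_commutator_r (A + B) = self_commutator_r A + self_commutator_r B + normal_cross_r A B"
  unfolding self_commutator_r_def normal_cross_r_def transpose_add matrix_add_ldistrib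
    matrix_add_rdistrib
  by (simp add: algebra_simps)

lemma normal_c_add_iff:
  assumes "normal_c A" "normal_c B"
  shows "normal_c (A + B) \<longleftrightarrow> normal_cross_c A B = 0"
  using assms by (simp add: normal_c_iff_self_commutator self_commutator_c_add)

lemma normal_r_add_iff:
  assumes "normal_r A" "normal_r B"
  shows "normal_r (A + B) \<longleftrightarrow> normal_cross_r A B = 0"
  using assms by (simp add: normal_r_iff_self_commutator self_commutator_r_add)

lemma normal_c_mat_add_iff:
  fixes B :: "complex^'n^'n"
  shows "normal_c (mat c + B) \<longleftrightarrow> normal_c B"
proof -
  have "self_commutator_c (mat c :: complex^'n^'n) = 0" "normal_cross_c (mat c) B = 0"
    \<comment> \<open>only instances: as a simp rule the commutation law loops\<close>
    by (simp_all add: self_commutator_c_def normal_cross_c_def cadjoint_mat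
        mat_matrix_mult_commute[of _ B] mat_matrix_mult_commute[of _ "cadjoint B"]
        mat_matrix_mult_commute[of _ "mat c"])
  then show ?thesis
    by (simp add: normal_c_iff_self_commutator self_commutator_c_add)
qed

lemma normal_r_mat_add_iff:
  fixes B :: "real^'n^'n"
  shows "normal_r (mat c + B) \<longleftrightarrow> normal_r B"
proof -
  have "self_commutator_r (mat c :: real^'n^'n) = 0" "normal_cross_r (mat c) B = 0"
    by (simp_all add: self_commutator_r_def normal_cross_r_def
        mat_matrix_mult_commute[of _ B] mat_matrix_mult_commute[of _ "transpose B"])
  then show ?thesis
    by (simp add: normal_r_iff_self_commutator self_commutator_r_add)
qed

lemma linear_normal_cross_c: "linear (normal_cross_c A)"
proof (rule linearI)
  show "normal_cross_c A (B + C) = normal_cross_c A B + normal_cross_c A C" for B C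
    unfolding normal_cross_c_def cadjoint_add matrix_add_ldistrib matrix_add_rdistrib
    by (simp add: algebra_simps)
  show "normal_cross_c A (r *\<^sub>R B) = r *\<^sub>R normal_cross_c A B" for r B
    unfolding normal_cross_c_def cadjoint_scaleR matrix_scalar_ac scalar_matrix_assoc[symmetric]
    by (simp add: scaleR_diff_right scaleR_add_right)
qed

lemma linear_normal_cross_r: "linear (normal_cross_r A)"
proof (rule linearI)
  show "normal_cross_r A (B + C) = normal_cross_r A B + normal_cross_r A C" for B C
    unfolding normal_cross_r_def transpose_add matrix_add_ldistrib matrix_add_rdistrib
    by (simp add: algebra_simps)
  show "normal_cross_r A (r *\<^sub>R B) = r *\<^sub>R normal_cross_r A B" for r B
    unfolding normal_cross_r_def transpose_scalar matrix_scalar_ac scalar_matrix_assoc[symmetric]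
    by (simp add: scaleR_diff_right scaleR_add_right)
qed

lemma normal_c_if_cadjoint_eq: "cadjoint N = N \<or> cadjoint N = - N \<Longrightarrow> normal_c N"
  by (auto simp: normal_c_def matrix_mult_uminus_left matrix_mult_uminus_right)

lemma normal_r_if_transpose_eq: "transpose N = N \<or> transpose N = - N \<Longrightarrow> normal_r N"
  by (auto simp: normal_r_def matrix_mult_uminus_left matrix_mult_uminus_right)

lemma span_normal_c: "span {N :: complex^'n^'n. normal_c N} = UNIV"
proof -
  have "C \<in> span {N. normal_c N}" for C :: "complex^'n^'n"
  proof -
    have "normal_c (C + cadjoint C)" "normal_c (C - cadjoint C)"
      by (simp_all add: normal_c_if_cadjoint_eq cadjoint_add cadjoint_diff add.commute)
    moreover have "C = (1/2) *\<^sub>R (C + cadjoint C) + (1/2) *\<^sub>R (C - cadjoint C)"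
      by (simp add: scaleR_add_right scaleR_diff_right flip: scaleR_add_left)
    ultimately show ?thesis
      by (metis mem_Collect_eq span_add span_base span_scale)
  qed
  then show ?thesis by auto
qed

lemma span_normal_r: "span {N :: real^'n^'n. normal_r N} = UNIV"
proof -
  have "C \<in> span {N. normal_r N}" for C :: "real^'n^'n"
  proof -
    have "normal_r (C + transpose C)" "normal_r (C - transpose C)"
      by (simp_all add: normal_r_if_transpose_eq transpose_add transpose_diff add.commute)
    moreover have "C = (1/2) *\<^sub>R (C + transpose C) + (1/2) *\<^sub>R (C - transpose C)"
      by (simp add: scaleR_add_right scaleR_diff_right flip: scaleR_add_left)
    ultimately show ?thesis
      by (metis mem_Collect_eq span_add span_base span_scale)
  qed
  then show ?thesis by auto
qed

definition single_entry :: "'n \<Rightarrow> 'm \<Rightarrow> 'a::zero \<Rightarrow> 'a^'m^'n" where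
  "single_entry k l z = (\<chi> i j. if i = k \<and> j = l then z else 0)"

lemma matrix_mult_single_entry_nth:
  "(A ** single_entry k l z) $ i $ j = (if j = l then A $ i $ k * z else 0)"
  by (simp add: matrix_matrix_mult_def single_entry_def if_distrib if_distribR sum.delta cong: if_cong)

lemma single_entry_matrix_mult_nth:
  "(single_entry k l z ** A) $ i $ j = (if i = k then z * A $ l $ j else 0)"
  by (simp add: matrix_matrix_mult_def single_entry_def if_distrib if_distribR sum.delta cong: if_cong)

lemma cadjoint_single_entry: "cadjoint (single_entry k l z) = single_entry l k (cnj z)"
  by (auto simp: cadjoint_def single_entry_def vec_eq_iff)

lemma transpose_single_entry: "transpose (single_entry k l z) = single_entry l k z"
  by (auto simp: transpose_def single_entry_def vec_eq_iff)

lemma eq_mat_if_scalar_entries: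
  assumes "\<And>k l. k \<noteq> l \<Longrightarrow> A $ k $ l = 0 \<and> A $ k $ k = A $ l $ l"
  shows "A = mat (A $ m $ m)"
  using assms by (auto simp: vec_eq_iff mat_def) metis

lemma eq_mat_if_normal_cross_c_eq_0:
  fixes A :: "complex^'n^'n"
  assumes "\<And>B. normal_cross_c A B = 0"
  shows "A = mat (A $ m $ m)"
proof (rule eq_mat_if_scalar_entries)
  fix k l :: 'n assume "k \<noteq> l"
  have entry: "normal_cross_c A (single_entry k l z) $ i $ j =
      (if j = l then cnj (A $ k $ i) * z else 0) + (if i = l then cnj z * A $ k $ j else 0)
    - (if j = k then A $ i $ l * cnj z else 0) - (if i = k then z * cnj (A $ j $ l) else 0)" for z i j
    by (simp add: normal_cross_c_def cadjoint_single_entry matrix_mult_single_entry_nth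
        single_entry_matrix_mult_nth cadjoint_nth)
  have "A $ k $ l + cnj (A $ k $ l) = 0"
    using entry[of 1 k k] \<open>k \<noteq> l\<close> by (simp add: assms algebra_simps)
  moreover have "\<i> * (A $ k $ l - cnj (A $ k $ l)) = 0"
    using entry[of \<i> k k] \<open>k \<noteq> l\<close> by (simp add: assms algebra_simps)
  moreover have "cnj (A $ k $ k) = cnj (A $ l $ l)"
    using entry[of 1 k l] \<open>k \<noteq> l\<close> by (simp add: assms)
  ultimately show "A $ k $ l = 0 \<and> A $ k $ k = A $ l $ l"
    by (simp add: complex_eq_iff)
qed

lemma eq_mat_if_normal_cross_r_eq_0:
  fixes A :: "real^'n^'n"
  assumes "\<And>B. normal_cross_r A B = 0"
  shows "A = mat (A $ m $ m)"
proof (rule eq_mat_if_scalar_entries)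
  fix k l :: 'n assume "k \<noteq> l"
  have entry: "normal_cross_r A (single_entry k l 1) $ i $ j =
      (if j = l then A $ k $ i else 0) + (if i = l then A $ k $ j else 0)
    - (if j = k then A $ i $ l else 0) - (if i = k then A $ j $ l else 0)" for i j
    by (simp add: normal_cross_r_def transpose_single_entry matrix_mult_single_entry_nth
        single_entry_matrix_mult_nth transpose_nth)
  show "A $ k $ l = 0 \<and> A $ k $ k = A $ l $ l"
    using entry[of k k] entry[of k l] \<open>k \<noteq> l\<close> by (simp add: assms)
qed

lemma span_normal_perturbations_c_eq_UNIV_iff:
  fixes A :: "complex^'n^'n"
  assumes "normal_c A"
  shows "span {B. normal_c B \<and> normal_c (A + B)} = UNIV \<longleftrightarrow> (\<exists>c. A = mat c)"
proof
  assume span_UNIV: "span {B. normal_c B \<and> normal_c (A + B)} = UNIV"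
  have "span {B. normal_c B \<and> normal_c (A + B)} \<subseteq> {B. normal_cross_c A B = 0}"
    by (rule span_minimal)
      (auto simp: normal_c_add_iff assms intro: linear_subspace_kernel linear_normal_cross_c)
  with span_UNIV eq_mat_if_normal_cross_c_eq_0 show "\<exists>c. A = mat c"
    by blast
next
  assume "\<exists>c. A = mat c"
  then show "span {B. normal_c B \<and> normal_c (A + B)} = UNIV"
    by (auto simp: normal_c_mat_add_iff span_normal_c)
qed

lemma span_normal_perturbations_r_eq_UNIV_iff:
  fixes A :: "real^'n^'n"
  assumes "normal_r A"
  shows "span {B. normal_r B \<and> normal_r (A + B)} = UNIV \<longleftrightarrow> (\<exists>c. A = mat c)"
proof
  assume span_UNIV: "span {B. normal_r B \<and> normal_r (A + B)} = UNIV"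
  have "span {B. normal_r B \<and> normal_r (A + B)} \<subseteq> {B. normal_cross_r A B = 0}"
    by (rule span_minimal)
      (auto simp: normal_r_add_iff assms intro: linear_subspace_kernel linear_normal_cross_r)
  with span_UNIV eq_mat_if_normal_cross_r_eq_0 show "\<exists>c. A = mat c"
    by blast
next
  assume "\<exists>c. A = mat c"
  then show "span {B. normal_r B \<and> normal_r (A + B)} = UNIV"
    by (auto simp: normal_r_mat_add_iff span_normal_r)
qed

theorem mainTheorem12:
  shows "(\<forall>A :: complex^2^2. normal_c A \<longrightarrow>
            (span (P_c A) = UNIV \<longleftrightarrow> (\<exists>c. A = mat c)))
       \<and> (\<forall>A :: real^2^2. normal_r A \<longrightarrow>
            (span (P_r A) = UNIV \<longleftrightarrow> (\<exists>c. A = mat c)))"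
  unfolding P_c_def P_r_def
  using span_normal_perturbations_c_eq_UNIV_iff span_normal_perturbations_r_eq_UNIV_iff
  by blast

end
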